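(* Let $X$ be a hyperbolic metric on $S$ and let $\alpha,\beta,\gamma\in\hat{\pi}$ be such that the $X$-geodesics $\alpha(X)$ and $\beta(X)$ intersect transversally. Let $P$ be an $(\alpha(X),\beta(X))$-intersection point. Then the equality $\widetilde{(\alpha^m*_P\beta)}_0=\widetilde{\gamma}$ holds for at most two positive integers $m$, and likewise the equality $\widetilde{(\alpha^m*_P\beta)}_\infty=\widetilde{\gamma}$ holds for at most two positive integers $m$.
   Context: $S$ is an oriented surface (possibly with boundary and punctures) of negative Euler characteristic; $\hat{\pi}$ is the set of free homotopy classes of directed closed curves on $S$. For a hyperbolic metric $X$ on $S$ (a point of Teichmüller space) and $\alpha\in\hat{\pi}$, $\alpha(X)$ denotes the geodesic representative of $\alpha$. If $a,b$ are closed curves intersecting transversally, an $(a,b)$-intersection point is a point $P\in a\cap b$ together with a choice of a pair of small arcs, one of $a$ and one of $b$, intersecting only at $P$. For $\alpha^m$ ($m\ge1$) the geodesic $\alpha^m(X)$ is $\alpha(X)$ traversed $m$ times, so $P$ is also regarded as an $(\alpha^m(X),\beta(X))$-intersection point. For directed curves $\alpha,\beta$ meeting transversally at $P$, with $\varepsilon_P(\alpha,\beta)=\pm1$ the sign of the intersection at $P$ and $\alpha_P,\beta_P$ the loops based at $P$, define $(\alpha*_P\beta)_0=|\alpha_P\beta_P^{\varepsilon_P(\alpha,\beta)}|$ and $(\alpha*_P\beta)_\infty=|\alpha_P\beta_P^{-\varepsilon_P(\alpha,\beta)}|$, where $|\cdot|$ denotes free homotopy class. For $x\in\hat{\pi}$,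 $\widetilde{x}$ denotes its free homotopy class with orientation forgotten (so $\widetilde{x}=\widetilde{y}$ iff $y=x$ or $y=x^{-1}$). *)

theory Defs
  imports "HOL-Analysis.Analysis"
begin

text \<open>Model: a hyperbolic surface (S,X) is the quotient of the upper half plane H by a
torsion-free, finitely generated Fuchsian group. We work with the preimage Gamma of
this group in SL(2,R) (so Gamma contains -1). Free homotopy classes of directed closed
curves are conjugacy classes in Gamma taken up to sign (i.e. conjugacy classes in PSL).\<close>

type_synonym mat2 = "real^2^2"

definition SL2 :: "mat2 set" where
  "SL2 = {M. det M = 1}"

fun mpow :: "mat2 \<Rightarrow> nat \<Rightarrow> mat2" where
  "mpow M 0 = mat 1"
| "mpow M (Suc n) = M ** mpow M n"

definition uhp :: "complex set" where
  "uhp = {z. Im z > 0}"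

definition mob :: "mat2 \<Rightarrow> complex \<Rightarrow> complex" where
  "mob M z = (complex_of_real (M$1$1) * z + complex_of_real (M$1$2)) /
             (complex_of_real (M$2$1) * z + complex_of_real (M$2$2))"

definition hdist :: "complex \<Rightarrow> complex \<Rightarrow> real" where
  "hdist z w = arcosh (1 + (cmod (z - w))^2 / (2 * Im z * Im w))"

definition hyperbolic_elt :: "mat2 \<Rightarrow> bool" where
  "hyperbolic_elt M \<longleftrightarrow> M \<in> SL2 \<and> \<bar>trace M\<bar> > 2"

text \<open>The axis of an isometry: the set of points of minimal displacement
(for a hyperbolic element this is its invariant geodesic).\<close>
definition axis :: "mat2 \<Rightarrow> complex set" where
  "axis M = {z \<in> uhp. \<forall>w \<in> uhp. hdist z (mob M z) \<le> hdist w (mob M w)}"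

inductive_set generated :: "mat2 set \<Rightarrow> mat2 set" for F where
  gen_one: "mat 1 \<in> generated F"
| gen_mult: "f \<in> F \<Longrightarrow> x \<in> generated F \<Longrightarrow> f ** x \<in> generated F"
| gen_inv: "f \<in> F \<Longrightarrow> x \<in> generated F \<Longrightarrow> matrix_inv f ** x \<in> generated F"

definition fuchsian :: "mat2 set \<Rightarrow> bool" where
  "fuchsian \<Gamma> \<longleftrightarrow>
     \<Gamma> \<subseteq> SL2 \<and> mat 1 \<in> \<Gamma> \<and> - mat 1 \<in> \<Gamma> \<and>
     (\<forall>M\<in>\<Gamma>. \<forall>N\<in>\<Gamma>. M ** N \<in> \<Gamma>) \<and> (\<forall>M\<in>\<Gamma>. matrix_inv M \<in> \<Gamma>) \<and>
     (\<forall>M\<in>\<Gamma>. \<exists>e>0. \<forall>N\<in>\<Gamma>. dist N M < e \<longrightarrow> N = M) \<and>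
     (\<forall>M\<in>\<Gamma>. \<not> \<bar>trace M\<bar> < 2) \<and>
     (\<exists>F. finite F \<and> F \<subseteq> \<Gamma> \<and> generated F = \<Gamma>)"

definition fclass :: "mat2 set \<Rightarrow> mat2 \<Rightarrow> mat2 set" where
  "fclass \<Gamma> M = {s *\<^sub>R (g ** M ** matrix_inv g) | g s. g \<in> \<Gamma> \<and> (s = 1 \<or> s = -1)}"

definition pihat :: "mat2 set \<Rightarrow> mat2 set set" where
  "pihat \<Gamma> = fclass \<Gamma> ` \<Gamma>"

definition cinv :: "mat2 set \<Rightarrow> mat2 set" where
  "cinv x = matrix_inv ` x"

definition utilde :: "mat2 set \<Rightarrow> mat2 set set" where
  "utilde x = {x, cinv x}"

text \<open>The geodesic representatives alpha(X), beta(X) exist and intersect transversally: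
both classes are hyperbolic and no lift of alpha(X) coincides with a lift of beta(X).\<close>
definition transversal :: "mat2 set \<Rightarrow> mat2 set \<Rightarrow> bool" where
  "transversal \<alpha> \<beta> \<longleftrightarrow> (\<forall>A\<in>\<alpha>. hyperbolic_elt A) \<and> (\<forall>B\<in>\<beta>. hyperbolic_elt B) \<and>
      (\<forall>A\<in>\<alpha>. \<forall>B\<in>\<beta>. axis A \<noteq> axis B)"

text \<open>An (alpha(X),beta(X))-intersection point P is given by a pair (A',B') of
representatives whose axes (lifts of the chosen arcs of alpha(X) and beta(X)) meet at a
lift of P; A' and B' are then the based loops alpha_P and beta_P. (Intersection points are
the orbits of such pairs under simultaneous conjugation; we work with representatives.)\<close>
definition ipoints :: "mat2 set \<Rightarrow> mat2 set \<Rightarrow> (mat2 \<times> mat2) set" where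
  "ipoints \<alpha> \<beta> = {(A, B). A \<in> \<alpha> \<and> B \<in> \<beta> \<and> axis A \<inter> axis B \<noteq> {}}"

definition loop_fst :: "mat2 \<times> mat2 \<Rightarrow> mat2" where "loop_fst P = fst P"
definition loop_snd :: "mat2 \<times> mat2 \<Rightarrow> mat2" where "loop_snd P = snd P"

definition star_e :: "mat2 set \<Rightarrow> nat \<Rightarrow> mat2 \<times> mat2 \<Rightarrow> int \<Rightarrow> mat2 set" where
  "star_e \<Gamma> m P e = fclass \<Gamma> (mpow (loop_fst P) m **
       (if e = 1 then loop_snd P else matrix_inv (loop_snd P)))"

end

theory Submission
  imports Defs
begin

text \<open>Choosing representatives at P, the class \<open>\<alpha>\<^sup>m *\<^sub>P \<beta>\<close> is represented by
\<open>A\<^sup>m B\<^sup>\<plusminus>\<^sup>1\<close> with A a hyperbolic element of SL(2,R), and an unoriented class determines the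
absolute value of the trace. By Cayley-Hamilton, \<open>t\<^sub>m = tr (A\<^sup>m B)\<close> satisfies
\<open>t\<^sub>m\<^sub>+\<^sub>2 = tr A \<cdot> t\<^sub>m\<^sub>+\<^sub>1 - t\<^sub>m\<close>, whose characteristic roots are the eigenvalues
\<open>\<lambda>, 1/\<lambda>\<close> of A with \<open>|\<lambda>| > 1\<close>; hence \<open>|t\<^sub>m| = |a r\<^sup>m + b / r\<^sup>m|\<close> with \<open>r = |\<lambda>|\<close>.
Finally \<open>x \<mapsto> |a x + b / x|\<close> takes a positive value c at most twice on \<open>x > 0\<close>: among three
solutions two have the same value \<open>a x + b / x = \<plusminus>c\<close>, which pins down \<open>b = a x y\<close>, and then
\<open>|a| (w + x y / w) = c = |a| (x + y)\<close> forces \<open>w \<in> {x, y}\<close>.\<close>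

lemma matrix_inv_left_right:
  assumes "invertible A"
  shows matrix_inv_right: "A ** matrix_inv A = mat 1"
    and matrix_inv_left: "matrix_inv A ** A = mat 1"
  using someI_ex[OF assms[unfolded invertible_def]] by (simp_all add: matrix_inv_def)

lemma matrix_inv_unique:
  fixes A :: "'a::semiring_1^'n^'m"
  assumes "A ** N = mat 1" and "N ** A = mat 1"
  shows "matrix_inv A = N"
proof -
  have "invertible A"
    using assms unfolding invertible_def by blast
  have "matrix_inv A = matrix_inv A ** (A ** N)"
    by (simp add: assms(1) matrix_mul_rid)
  also have "\<dots> = N"
    by (simp add: matrix_mul_assoc matrix_inv_left[OF \<open>invertible A\<close>] matrix_mul_lid)
  finally show ?thesis .
qed

lemma trace_conjugate:
  fixes g C :: "'a::comm_semiring_1^'n^'n"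
  assumes "invertible g"
  shows "trace (g ** C ** matrix_inv g) = trace C"
proof -
  have "trace (g ** C ** matrix_inv g) = trace (matrix_inv g ** (g ** C))"
    by (rule trace_mul_sym)
  also have "\<dots> = trace C"
    by (metis matrix_mul_assoc matrix_inv_left[OF assms] matrix_mul_lid)
  finally show ?thesis .
qed

lemma det_conjugate:
  fixes g C :: "'a::comm_ring_1^'n^'n"
  assumes "invertible g"
  shows "det (g ** C ** matrix_inv g) = det C"
proof -
  have "det g * det (matrix_inv g) = 1"
    using det_mul[of g "matrix_inv g"] by (simp add: matrix_inv_right[OF assms])
  then show ?thesis
    by (simp add: det_mul algebra_simps)
qed

lemma trace_scaleR: "trace (s *\<^sub>R A) = s * trace (A :: real^'n^'n)"
  by (simp add: trace_def sum_distrib_left)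

lemma scaleR_diff_matrix_mul:
  "(s *\<^sub>R X - Y) ** Z = s *\<^sub>R (X ** Z) - Y ** Z" for X Y :: "real^'n^'m"
  by (simp add: vec_eq_iff matrix_matrix_mult_def sum_subtractf sum_distrib_left algebra_simps)

lemma det_scaleR_mat2: "det (s *\<^sub>R A) = s^2 * det (A :: mat2)"
  by (simp add: det_2 power2_eq_square algebra_simps)

lemma cayley_hamilton_mat2: "A ** A = trace A *\<^sub>R A - det A *\<^sub>R mat 1" for A :: mat2
  by (simp add: vec_eq_iff forall_2 matrix_matrix_mult_def sum_2 mat_def det_2 trace_def
      algebra_simps)

lemma matrix_inv_sl2:
  fixes A :: mat2
  assumes "det A = 1"
  shows "matrix_inv A = trace A *\<^sub>R mat 1 - A"
proof (rule matrix_inv_unique)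
  show "A ** (trace A *\<^sub>R mat 1 - A) = mat 1" and "(trace A *\<^sub>R mat 1 - A) ** A = mat 1"
    using cayley_hamilton_mat2[of A] assms
    by (simp_all add: vec_eq_iff forall_2 matrix_matrix_mult_def sum_2 mat_def algebra_simps)
qed

lemma trace_matrix_inv_sl2:
  fixes A :: mat2
  assumes "det A = 1"
  shows "trace (matrix_inv A) = trace A"
  by (simp add: matrix_inv_sl2[OF assms] trace_sub trace_scaleR trace_I)

lemma trace_mpow_mult_recurrence:
  fixes A B :: mat2
  assumes "det A = 1"
  shows "trace (mpow A (Suc (Suc m)) ** B)
           = trace A * trace (mpow A (Suc m) ** B) - trace (mpow A m ** B)"
proof -
  have "mpow A (Suc (Suc m)) = (trace A *\<^sub>R A - mat 1) ** mpow A m"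
    using cayley_hamilton_mat2[of A] assms by (simp add: matrix_mul_assoc)
  also have "\<dots> = trace A *\<^sub>R mpow A (Suc m) - mpow A m"
    by (simp add: scaleR_diff_matrix_mul matrix_mul_assoc matrix_mul_lid)
  finally show ?thesis
    by (simp add: scaleR_diff_matrix_mul trace_sub trace_scaleR)
qed

lemma abs_trace_fclass:
  assumes "\<Gamma> \<subseteq> SL2" and "Y \<in> fclass \<Gamma> C"
  shows "\<bar>trace Y\<bar> = \<bar>trace C\<bar>" and "det Y = det C"
proof -
  obtain g s where "g \<in> \<Gamma>" and s: "s = 1 \<or> s = -1" and Y: "Y = s *\<^sub>R (g ** C ** matrix_inv g)"
    using assms(2) unfolding fclass_def by blast
  then have "invertible g"
    using assms(1) by (auto simp: SL2_def invertible_det_nz)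
  then show "\<bar>trace Y\<bar> = \<bar>trace C\<bar>" and "det Y = det C"
    using s by (auto simp: Y trace_scaleR trace_conjugate det_scaleR_mat2 det_conjugate)
qed

lemma self_mem_fclass:
  assumes "mat 1 \<in> \<Gamma>"
  shows "M \<in> fclass \<Gamma> M"
proof -
  have "matrix_inv (mat 1 :: mat2) = mat 1"
    by (rule matrix_inv_unique) (simp_all add: matrix_mul_lid)
  then have "M = 1 *\<^sub>R (mat 1 ** M ** matrix_inv (mat 1))"
    by (simp add: matrix_mul_lid matrix_mul_rid)
  then show ?thesis
    unfolding fclass_def using assms by blast
qed

lemma abs_trace_eq_if_utilde_fclass_eq:
  assumes "\<Gamma> \<subseteq> SL2" and "mat 1 \<in> \<Gamma>" and "det C = 1"
    and "utilde (fclass \<Gamma> X) = utilde (fclass \<Gamma> C)"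
  shows "\<bar>trace X\<bar> = \<bar>trace C\<bar>"
proof -
  have "fclass \<Gamma> X = fclass \<Gamma> C \<or> fclass \<Gamma> X = cinv (fclass \<Gamma> C)"
    using assms(4) unfolding utilde_def by (metis insertI1 insertE singletonD)
  then obtain Y where Y: "Y \<in> fclass \<Gamma> C" and "X = Y \<or> X = matrix_inv Y"
    using self_mem_fclass[OF assms(2), of X] unfolding cinv_def by auto
  moreover have "det Y = 1"
    using abs_trace_fclass(2)[OF assms(1) Y] assms(3) by simp
  ultimately show ?thesis
    using abs_trace_fclass(1)[OF assms(1) Y] trace_matrix_inv_sl2 by auto
qed

lemma linear_recurrence_closed_form:
  fixes t :: "nat \<Rightarrow> 'a::field"
  assumes rec: "\<And>m. t (Suc (Suc m)) = (l + u) * t (Suc m) - l * u * t m" and "l \<noteq> u"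
  obtains a b where "\<And>m. t m = a * l^m + b * u^m"
proof -
  define a where "a = (t 1 - u * t 0) / (l - u)"
  define b where "b = (l * t 0 - t 1) / (l - u)"
  have "l - u \<noteq> 0"
    using \<open>l \<noteq> u\<close> by simp
  have "t m = a * l^m + b * u^m" for m
  proof (induction m rule: induct_nat_012)
    case 0
    have "a + b = (l - u) * t 0 / (l - u)"
      by (simp add: a_def b_def add_divide_distrib[symmetric] algebra_simps)
    then show ?case
      using \<open>l - u \<noteq> 0\<close> by simp
  next
    case 1
    have "a * l + b * u = (l - u) * t 1 / (l - u)"
      by (simp add: a_def b_def add_divide_distrib[symmetric] times_divide_eq_left algebra_simps)
    then show ?case
      using \<open>l - u \<noteq> 0\<close> by simp
  next
    case (ge2 n)
    then show ?case
      by (simp add: rec algebra_simps)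
  qed
  with that show ?thesis .
qed

lemma abs_power_add_inverse_power:
  fixes l a b :: real
  shows "\<bar>a * l^m + b * (1/l)^m\<bar> = \<bar>a * \<bar>l\<bar>^m + b / \<bar>l\<bar>^m\<bar>"
proof (cases "l < 0")
  case True
  have neg_power: "x^m = (-1)^m * \<bar>x\<bar>^m" if "x < 0" for x :: real
    using that by (simp flip: power_mult_distrib)
  have "l^m = (-1)^m * \<bar>l\<bar>^m" and "(1/l)^m = (-1)^m * (1/\<bar>l\<bar>)^m"
    using neg_power[of l] neg_power[of "1/l", unfolded abs_divide abs_one] True by simp_all
  then have "a * l^m + b * (1/l)^m = (-1)^m * (a * \<bar>l\<bar>^m + b / \<bar>l\<bar>^m)"
    by (simp add: power_one_over algebra_simps)
  then show ?thesis
    by (simp add: abs_mult)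
qed (simp add: power_one_over)

lemma finite_card_le_2_if_no_three_distinct:
  assumes "\<And>x y z. x \<in> S \<Longrightarrow> y \<in> S \<Longrightarrow> z \<in> S \<Longrightarrow> x \<noteq> y \<Longrightarrow> x \<noteq> z \<Longrightarrow> y \<noteq> z \<Longrightarrow> False"
  shows "finite S \<and> card S \<le> 2"
proof (rule finite_if_finite_subsets_card_bdd)
  fix G assume "G \<subseteq> S" and "finite G"
  show "card G \<le> 2"
  proof (rule ccontr)
    assume "\<not> card G \<le> 2"
    then obtain H where "H \<subseteq> G" and "card H = 3"
      using obtain_subset_with_card_n[of 3 G] by auto
    then obtain x y z where "{x, y, z} \<subseteq> G" and "x \<noteq> y" "x \<noteq> z" "y \<noteq> z"
      by (auto simp: card_3_iff)
    then show False
      using assms \<open>G \<subseteq> S\<close> by blast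
  qed
qed

lemma add_inverse_eq_imp_eq_or_eq:
  fixes a b x y z :: real
  assumes "x > 0" "y > 0" "z > 0" "x \<noteq> y"
    and xy: "a * x + b / x = a * y + b / y"
    and xz: "\<bar>a * z + b / z\<bar> = \<bar>a * x + b / x\<bar>" and "a * x + b / x \<noteq> 0"
  shows "z = x \<or> z = y"
proof -
  have "(x - y) * (a * x * y - b) = 0"
    using xy assms(1,2) by (simp add: field_simps)
  then have b: "b = a * x * y"
    using \<open>x \<noteq> y\<close> by simp
  have "a * x + b / x = a * (x + y)" and "a * z + b / z = a * (z + x * y / z)"
    using assms(1,3) by (simp_all add: b algebra_simps)
  moreover have "z + x * y / z > 0"
    using assms(1-3) by (simp add: add_pos_pos)
  ultimately have "z + x * y / z = x + y"
    using xz \<open>a * x + b / x \<noteq> 0\<close> assms(1,2) by (simp add: abs_mult)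
  then have "(z - x) * (z - y) = 0"
    using assms(3) by (simp add: field_simps)
  then show ?thesis
    by simp
qed

lemma abs_add_inverse_eq_no_three_solutions:
  fixes a b c :: real
  assumes "c > 0" and "x > 0" "y > 0" "z > 0" and "x \<noteq> y" "x \<noteq> z" "y \<noteq> z"
    and "\<bar>a * x + b / x\<bar> = c" "\<bar>a * y + b / y\<bar> = c" "\<bar>a * z + b / z\<bar> = c"
  shows False
proof -
  let ?f = "\<lambda>w. a * w + b / w"
  have "?f x = ?f y \<or> ?f x = ?f z \<or> ?f y = ?f z"
    using assms(8-10) by linarith
  then show False
    using add_inverse_eq_imp_eq_or_eq[of _ _ _ a b] assms by (metis abs_zero less_irrefl)
qed

lemma finite_card_le_2_power_add_inverse_eq:
  fixes r a b c :: real
  assumes "r > 1" and "c > 0"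
  shows "finite {m::nat. \<bar>a * r^m + b / r^m\<bar> = c} \<and> card {m::nat. \<bar>a * r^m + b / r^m\<bar> = c} \<le> 2"
proof (rule finite_card_le_2_if_no_three_distinct)
  fix k m n assume "k \<in> {m. \<bar>a * r^m + b / r^m\<bar> = c}" "m \<in> {m. \<bar>a * r^m + b / r^m\<bar> = c}"
    "n \<in> {m. \<bar>a * r^m + b / r^m\<bar> = c}" and "k \<noteq> m" "k \<noteq> n" "m \<noteq> n"
  then show False
    using abs_add_inverse_eq_no_three_solutions[of c "r^k" "r^m" "r^n" a b] assms
    by (simp add: power_inject_exp)
qed

lemma hyperbolic_trace_eigenvalue:
  fixes \<tau> :: real
  assumes "\<bar>\<tau>\<bar> > 2"
  obtains l where "\<bar>l\<bar> > 1" and "l + 1/l = \<tau>"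
proof -
  define q where "q = sqrt (\<tau>^2 - 4)"
  have "2^2 < \<bar>\<tau>\<bar>^2"
    using assms by (intro power_strict_mono) auto
  then have "q \<ge> 0" and q2: "q^2 = \<tau>^2 - 4"
    by (simp_all add: q_def)
  have root: "l + 1/l = \<tau>" if "2 * l = \<tau> + q \<or> 2 * l = \<tau> - q" and "l \<noteq> 0" for l
  proof -
    have "(2 * l - \<tau>)^2 = q^2"
      using that(1) by auto
    then have "l * l + 1 = \<tau> * l"
      unfolding q2 by (simp add: power2_eq_square algebra_simps)
    then show ?thesis
      using \<open>l \<noteq> 0\<close> by (simp add: field_simps)
  qed
  show ?thesis
  proof (cases "\<tau> > 0")
    case True
    then show ?thesis
      using that[of "(\<tau> + q) / 2"] root[of "(\<tau> + q) / 2"] assms \<open>q \<ge> 0\<close> by simp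
  next
    case False
    then show ?thesis
      using that[of "(\<tau> - q) / 2"] root[of "(\<tau> - q) / 2"] assms \<open>q \<ge> 0\<close> by simp
  qed
qed

lemma finite_card_le_2_abs_trace_mpow_mult_eq:
  fixes A B :: mat2
  assumes "det A = 1" and "\<bar>trace A\<bar> > 2" and "c > 0"
  shows "finite {m. \<bar>trace (mpow A m ** B)\<bar> = c} \<and> card {m. \<bar>trace (mpow A m ** B)\<bar> = c} \<le> 2"
proof -
  obtain l where "\<bar>l\<bar> > 1" and l: "l + 1/l = trace A"
    using hyperbolic_trace_eigenvalue[OF assms(2)] .
  have "l \<noteq> 0"
    using \<open>\<bar>l\<bar> > 1\<close> by auto
  have "l * l \<noteq> 1"
    using \<open>\<bar>l\<bar> > 1\<close> by (metis abs_mult abs_one less_1_mult less_irrefl)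
  then have "l \<noteq> 1/l" and "l * (1/l) = 1"
    using \<open>l \<noteq> 0\<close> by (auto simp: field_simps)
  define t where "t m = trace (mpow A m ** B)" for m
  have "t (Suc (Suc m)) = (l + 1/l) * t (Suc m) - l * (1/l) * t m" for m
    unfolding t_def l \<open>l * (1/l) = 1\<close> using trace_mpow_mult_recurrence[OF assms(1)] by simp
  then obtain a b where "\<And>m. t m = a * l^m + b * (1/l)^m"
    using linear_recurrence_closed_form \<open>l \<noteq> 1/l\<close> by blast
  then have "{m. \<bar>trace (mpow A m ** B)\<bar> = c} = {m. \<bar>a * \<bar>l\<bar>^m + b / \<bar>l\<bar>^m\<bar> = c}"
    by (simp add: t_def[symmetric] abs_power_add_inverse_power)
  then show ?thesis
    using finite_card_le_2_power_add_inverse_eq[OF \<open>\<bar>l\<bar> > 1\<close> assms(3)] by simp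
qed

theorem lemma3p7:
  fixes \<Gamma> :: "mat2 set" and \<alpha> \<beta> \<gamma> :: "mat2 set" and P :: "mat2 \<times> mat2"
  assumes "fuchsian \<Gamma>"
    and "\<alpha> \<in> pihat \<Gamma>" and "\<beta> \<in> pihat \<Gamma>" and "\<gamma> \<in> pihat \<Gamma>"
    and "transversal \<alpha> \<beta>"
    and "P \<in> ipoints \<alpha> \<beta>"
  shows "\<forall>e \<in> {1, -1::int}.
           finite {m::nat. 0 < m \<and> utilde (star_e \<Gamma> m P e) = utilde \<gamma>} \<and>
           card {m::nat. 0 < m \<and> utilde (star_e \<Gamma> m P e) = utilde \<gamma>} \<le> 2"
proof
  fix e :: int
  obtain A B where P: "P = (A, B)" and "A \<in> \<alpha>"
    using assms(6) unfolding ipoints_def by auto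
  then have "hyperbolic_elt A"
    using assms(5) unfolding transversal_def by blast
  then have "det A = 1" and "\<bar>trace A\<bar> > 2"
    unfolding hyperbolic_elt_def SL2_def by auto
  obtain C where "C \<in> \<Gamma>" and \<gamma>: "\<gamma> = fclass \<Gamma> C"
    using assms(4) unfolding pihat_def by auto
  have \<Gamma>: "\<Gamma> \<subseteq> SL2" "mat 1 \<in> \<Gamma>" and "\<not> \<bar>trace C\<bar> < 2"
    using assms(1) \<open>C \<in> \<Gamma>\<close> unfolding fuchsian_def by blast+
  then have "det C = 1" and "\<bar>trace C\<bar> > 0"
    using \<open>C \<in> \<Gamma>\<close> by (auto simp: SL2_def)
  define B' where "B' = (if e = 1 then B else matrix_inv B)"
  have star_e_eq: "star_e \<Gamma> m P e = fclass \<Gamma> (mpow A m ** B')" for m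
    by (simp add: star_e_def loop_fst_def loop_snd_def P B'_def)
  have "\<bar>trace (mpow A m ** B')\<bar> = \<bar>trace C\<bar>" if "utilde (star_e \<Gamma> m P e) = utilde \<gamma>" for m
    using that unfolding star_e_eq \<gamma> by (rule abs_trace_eq_if_utilde_fclass_eq[OF \<Gamma> \<open>det C = 1\<close>])
  then have "{m. 0 < m \<and> utilde (star_e \<Gamma> m P e) = utilde \<gamma>}
               \<subseteq> {m. \<bar>trace (mpow A m ** B')\<bar> = \<bar>trace C\<bar>}"
    by blast
  then show "finite {m. 0 < m \<and> utilde (star_e \<Gamma> m P e) = utilde \<gamma>} \<and>
      card {m. 0 < m \<and> utilde (star_e \<Gamma> m P e) = utilde \<gamma>} \<le> 2"
    using finite_card_le_2_abs_trace_mpow_mult_eq[OF \<open>det A = 1\<close> \<open>\<bar>trace A\<bar> > 2\<close> \<open>\<bar>trace C\<bar> > 0\<close>]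
    by (meson card_mono finite_subset order_trans)
qed

end
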